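(* If $D$ is a quaternary near-extremal Hermitian self-dual code of length $36$ and $\alpha$ denotes the number of codewords of weight $12$ in $D$, then $\alpha=9\beta$ for some integer $\beta$ with $1\le\beta\le 7140$.
   Context: Let $\mathbb{F}_4=\{0,1,\omega,\omega^2\}$ with $\omega^2=\omega+1$. A quaternary code of length $n$ is a linear subspace of $\mathbb{F}_4^n$; it is Hermitian self-dual if it equals its dual with respect to $\langle x,y\rangle_H=\sum_k x_k y_k^2$. The weight of a vector is the number of nonzero coordinates. A quaternary Hermitian self-dual code of length $36$ is near-extremal if its minimum nonzero weight is $12$. *)

theory Defs
  imports Main
begin

text \<open>The field F_4 = {0, 1, w, w^2} with w^2 = w + 1 (characteristic 2).\<close>
datatype gf4 = G0 | G1 | Gw | Gw2

fun gf4_add :: "gf4 \<Rightarrow> gf4 \<Rightarrow> gf4" where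
  "gf4_add G0 y = y"
| "gf4_add x G0 = x"
| "gf4_add G1 G1 = G0" | "gf4_add G1 Gw = Gw2" | "gf4_add G1 Gw2 = Gw"
| "gf4_add Gw G1 = Gw2" | "gf4_add Gw Gw = G0" | "gf4_add Gw Gw2 = G1"
| "gf4_add Gw2 G1 = Gw" | "gf4_add Gw2 Gw = G1" | "gf4_add Gw2 Gw2 = G0"

fun gf4_mul :: "gf4 \<Rightarrow> gf4 \<Rightarrow> gf4" where
  "gf4_mul G0 y = G0"
| "gf4_mul x G0 = G0"
| "gf4_mul G1 y = y"
| "gf4_mul x G1 = x"
| "gf4_mul Gw Gw = Gw2" | "gf4_mul Gw Gw2 = G1"
| "gf4_mul Gw2 Gw = G1" | "gf4_mul Gw2 Gw2 = Gw"

text \<open>Vectors of F_4^n are lists of length n.\<close>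
definition vadd :: "gf4 list \<Rightarrow> gf4 list \<Rightarrow> gf4 list" where
  "vadd x y = map2 gf4_add x y"

definition smul :: "gf4 \<Rightarrow> gf4 list \<Rightarrow> gf4 list" where
  "smul a x = map (gf4_mul a) x"

definition linear_code :: "nat \<Rightarrow> gf4 list set \<Rightarrow> bool" where
  "linear_code n C \<longleftrightarrow>
     (\<forall>x\<in>C. length x = n) \<and> replicate n G0 \<in> C \<and>
     (\<forall>x\<in>C. \<forall>y\<in>C. vadd x y \<in> C) \<and> (\<forall>a. \<forall>x\<in>C. smul a x \<in> C)"

definition herm_ip :: "gf4 list \<Rightarrow> gf4 list \<Rightarrow> gf4" where
  "herm_ip x y = foldr gf4_add (map2 (\<lambda>a b. gf4_mul a (gf4_mul b b)) x y) G0"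

definition herm_dual :: "nat \<Rightarrow> gf4 list set \<Rightarrow> gf4 list set" where
  "herm_dual n C = {y. length y = n \<and> (\<forall>x\<in>C. herm_ip x y = G0)}"

definition herm_self_dual :: "nat \<Rightarrow> gf4 list set \<Rightarrow> bool" where
  "herm_self_dual n C \<longleftrightarrow> linear_code n C \<and> C = herm_dual n C"

definition wt :: "gf4 list \<Rightarrow> nat" where
  "wt x = length (filter (\<lambda>a. a \<noteq> G0) x)"

definition min_weight :: "nat \<Rightarrow> gf4 list set \<Rightarrow> nat \<Rightarrow> bool" where
  "min_weight n C d \<longleftrightarrow>
     (\<exists>c\<in>C. c \<noteq> replicate n G0 \<and> wt c = d) \<and>
     (\<forall>c\<in>C. c \<noteq> replicate n G0 \<longrightarrow> d \<le> wt c)"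

definition near_extremal_36 :: "gf4 list set \<Rightarrow> bool" where
  "near_extremal_36 D \<longleftrightarrow> herm_self_dual 36 D \<and> min_weight 36 D 12"

end

theory Submission
  imports Defs
begin

text \<open>
  Split the weight enumerator of the code according to whether the first coordinate vanishes.
  The Hermitian MacWilliams identity for this split enumerator, evaluated at finitely many integer
  points and combined with explicit integer certificates, becomes linear relations between the
  numbers of codewords of each split type.  Since all weights are even and nonzero codewords have
  weight at least 12, only 26 types occur, and two such relations are
  \<open>\<alpha>\<^sub>0 = 2 \<alpha>\<^sub>1\<close> (where \<open>\<alpha>\<^sub>0, \<alpha>\<^sub>1\<close> count the weight-12 codewords with zero, resp.
  nonzero, first coordinate) and \<open>12 \<alpha> + A\<^sub>1\<^sub>4 = 771120\<close>, where \<open>A\<^sub>1\<^sub>4\<close> counts the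
  codewords of weight 14.
  Multiplication by the three nonzero scalars splits the weight-12 codewords with nonzero first
  coordinate into orbits of size 3, each containing exactly one codeword starting with 1.
  Hence \<open>\<alpha> = 3 \<alpha>\<^sub>1 = 9 \<beta>\<close>, where \<open>\<beta> \<ge> 1\<close> since the minimum weight 12 is attained, and
  \<open>\<beta> \<le> 771120 / 108 = 7140\<close>.
\<close>

lemma gf4_UNIV: "(UNIV :: gf4 set) = {G0, G1, Gw, Gw2}"
  using gf4.exhaust by auto

instance gf4 :: finite
  by standard (simp add: gf4_UNIV)

lemma sum_UNIV_gf4: "(\<Sum>b\<in>UNIV. f b) = f G0 + f G1 + f Gw + f Gw2"
  by (simp add: gf4_UNIV add.assoc)

lemma gf4_add_G0_right [simp]: "gf4_add a G0 = a"
  by (cases a) auto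

lemma gf4_add_self [simp]: "gf4_add a a = G0"
  by (cases a) auto

lemma gf4_mul_G0_right [simp]: "gf4_mul a G0 = G0"
  by (cases a) auto

lemma gf4_mul_G1_left [simp]: "gf4_mul G1 a = a"
  by (cases a) auto

lemma gf4_mul_G1_right [simp]: "gf4_mul a G1 = a"
  by (cases a) auto

lemma gf4_add_assoc: "gf4_add (gf4_add a b) c = gf4_add a (gf4_add b c)"
  by (cases a; cases b; cases c) auto

lemma gf4_add_add_swap: "gf4_add (gf4_add a b) (gf4_add c d) = gf4_add (gf4_add a c) (gf4_add b d)"
  by (cases a; cases b; cases c; cases d) auto

lemma gf4_mul_assoc: "gf4_mul (gf4_mul a b) c = gf4_mul a (gf4_mul b c)"
  by (cases a; cases b; cases c) auto

lemma gf4_mul_add_distrib_left: "gf4_mul a (gf4_add b c) = gf4_add (gf4_mul a b) (gf4_mul a c)"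
  by (cases a; cases b; cases c) auto

lemma gf4_mul_add_distrib_right: "gf4_mul (gf4_add a b) c = gf4_add (gf4_mul a c) (gf4_mul b c)"
  by (cases a; cases b; cases c) auto

lemma gf4_mul_eq_G0_iff [simp]: "gf4_mul a b = G0 \<longleftrightarrow> a = G0 \<or> b = G0"
  by (cases a; cases b) auto

lemma gf4_cube_nonzero: "a \<noteq> G0 \<Longrightarrow> gf4_mul a (gf4_mul a a) = G1"
  by (cases a) auto

lemma gf4_inverse_exists: "a \<noteq> G0 \<Longrightarrow> \<exists>b. gf4_mul b a = G1 \<and> gf4_mul a b = G1"
  by (cases a) (auto intro: exI[of _ G1] exI[of _ Gw] exI[of _ Gw2])

text \<open>The additive character \<open>(-1)^Tr(a)\<close> of F_4, where \<open>Tr(a) = a + a^2\<close>.\<close>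
fun gf4_chi :: "gf4 \<Rightarrow> int" where
  "gf4_chi G0 = 1" | "gf4_chi G1 = 1" | "gf4_chi Gw = -1" | "gf4_chi Gw2 = -1"

lemma gf4_chi_add: "gf4_chi (gf4_add a b) = gf4_chi a * gf4_chi b"
  by (cases a; cases b) auto

lemma vadd_Nil [simp]: "vadd [] y = []" "vadd x [] = []"
  by (simp_all add: vadd_def)

lemma vadd_Cons [simp]: "vadd (a # x) (b # y) = gf4_add a b # vadd x y"
  by (simp add: vadd_def)

lemma length_vadd [simp]: "length (vadd x y) = min (length x) (length y)"
  by (simp add: vadd_def)

lemma smul_Nil [simp]: "smul a [] = []"
  by (simp add: smul_def)

lemma smul_Cons [simp]: "smul a (b # x) = gf4_mul a b # smul a x"
  by (simp add: smul_def)

lemma length_smul [simp]: "length (smul a x) = length x"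
  by (simp add: smul_def)

lemma herm_ip_Nil [simp]: "herm_ip [] y = G0" "herm_ip x [] = G0"
  by (simp_all add: herm_ip_def)

lemma herm_ip_Cons [simp]:
  "herm_ip (a # x) (b # y) = gf4_add (gf4_mul a (gf4_mul b b)) (herm_ip x y)"
  by (simp add: herm_ip_def)

lemma wt_Nil [simp]: "wt [] = 0"
  by (simp add: wt_def)

lemma wt_Cons [simp]: "wt (a # x) = (if a = G0 then wt x else Suc (wt x))"
  by (simp add: wt_def)

lemma wt_le_length: "wt x \<le> length x"
  by (simp add: wt_def)

lemma wt_eq_0_iff: "wt x = 0 \<longleftrightarrow> x = replicate (length x) G0"
  by (induction x) auto

lemma wt_eq_hd_tl: "x \<noteq> [] \<Longrightarrow> wt x = (if hd x = G0 then wt (tl x) else Suc (wt (tl x)))"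
  by (cases x) simp_all

lemma vadd_vadd_cancel: "length x = length y \<Longrightarrow> vadd (vadd x y) y = x"
  by (induction x y rule: list_induct2) (simp_all add: gf4_add_assoc)

lemma smul_smul: "smul a (smul b x) = smul (gf4_mul a b) x"
  by (induction x) (simp_all add: gf4_mul_assoc)

lemma smul_G1: "smul G1 x = x"
  by (induction x) simp_all

lemma hd_smul: "x \<noteq> [] \<Longrightarrow> hd (smul a x) = gf4_mul a (hd x)"
  by (cases x) simp_all

lemma wt_smul: "a \<noteq> G0 \<Longrightarrow> wt (smul a x) = wt x"
  by (induction x) simp_all

lemma herm_ip_vadd_left:
  "length x = length y \<Longrightarrow> herm_ip (vadd x y) u = gf4_add (herm_ip x u) (herm_ip y u)"
proof (induction x y arbitrary: u rule: list_induct2)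
  case (Cons a x b y)
  then show ?case
    by (cases u) (simp_all add: gf4_mul_add_distrib_right gf4_add_add_swap)
qed simp

lemma herm_ip_smul_left: "herm_ip (smul a x) u = gf4_mul a (herm_ip x u)"
proof (induction x arbitrary: u)
  case (Cons b x)
  then show ?case
    by (cases u) (simp_all add: gf4_mul_add_distrib_left gf4_mul_assoc)
qed simp

lemma herm_ip_self: "herm_ip x x = (if even (wt x) then G0 else G1)"
  by (induction x) (auto simp: gf4_cube_nonzero)

lemma linear_codeD:
  assumes "linear_code n C"
  shows "x \<in> C \<Longrightarrow> length x = n" and "replicate n G0 \<in> C"
    and "x \<in> C \<Longrightarrow> y \<in> C \<Longrightarrow> vadd x y \<in> C" and "x \<in> C \<Longrightarrow> smul a x \<in> C"
  using assms by (auto simp: linear_code_def)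

lemma finite_lists_length: "finite {x :: 'a::finite list. length x = n}"
  using finite_lists_length_eq[of "UNIV :: 'a set" n] by simp

lemma linear_code_finite: "linear_code n C \<Longrightarrow> finite C"
  using finite_subset[OF _ finite_lists_length, of C n] linear_codeD(1) by blast

lemma herm_dual_subset: "herm_dual n C \<subseteq> {x. length x = n}"
  by (auto simp: herm_dual_def)

text \<open>Orthogonality of characters: if \<open>u \<notin> C\<^sup>\<bottom>\<close>, a codeword \<open>d\<close> with \<open>\<langle>d,u\<rangle> = \<omega>\<close>
  exists, and translation by \<open>d\<close> flips the sign of every term.\<close>
lemma sum_gf4_chi_herm_ip:
  assumes C: "linear_code n C" and u: "length u = n"
  shows "(\<Sum>c\<in>C. gf4_chi (herm_ip c u)) = (if u \<in> herm_dual n C then int (card C) else 0)"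
proof (cases "u \<in> herm_dual n C")
  case True
  then show ?thesis by (simp add: herm_dual_def)
next
  case False
  then obtain c where c: "c \<in> C" "herm_ip c u \<noteq> G0"
    using u by (auto simp: herm_dual_def)
  then obtain s where s: "gf4_mul s (herm_ip c u) = G1"
    using gf4_inverse_exists by blast
  define d where "d = smul (gf4_mul Gw s) c"
  have d: "d \<in> C" "length d = n" "herm_ip d u = Gw"
    using linear_codeD[OF C] c s by (simp_all add: d_def herm_ip_smul_left gf4_mul_assoc)
  have "vadd x d \<in> C \<and> vadd (vadd x d) d = x
      \<and> gf4_chi (herm_ip (vadd x d) u) = - gf4_chi (herm_ip x u)" if x: "x \<in> C" for x
  proof -
    have "length x = n" using x by (rule linear_codeD(1)[OF C])
    then show ?thesis
      using linear_codeD(3)[OF C x d(1)] d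
      by (simp add: vadd_vadd_cancel herm_ip_vadd_left gf4_chi_add)
  qed
  then have "(\<Sum>c\<in>C. gf4_chi (herm_ip c u)) = (\<Sum>c\<in>C. - gf4_chi (herm_ip c u))"
    by (intro sum.reindex_bij_witness[where i="\<lambda>c. vadd c d" and j="\<lambda>c. vadd c d"]) auto
  with False show ?thesis by (simp add: sum_negf)
qed

fun coord_prod :: "(gf4 \<Rightarrow> int) list \<Rightarrow> gf4 list \<Rightarrow> int" where
  "coord_prod (f # fs) (b # x) = f b * coord_prod fs x"
| "coord_prod _ _ = 1"

definition herm_transform :: "(gf4 \<Rightarrow> int) \<Rightarrow> gf4 \<Rightarrow> int" where
  "herm_transform f a = (\<Sum>b\<in>UNIV. gf4_chi (gf4_mul a (gf4_mul b b)) * f b)"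

lemma sum_lists_length_Suc:
  fixes g :: "'a::finite list \<Rightarrow> 'b::comm_monoid_add"
  shows "(\<Sum>x | length x = Suc n. g x) = (\<Sum>b\<in>UNIV. \<Sum>x | length x = n. g (b # x))"
proof -
  have eq: "{x :: 'a list. length x = Suc n} = (\<lambda>(b, x). b # x) ` (UNIV \<times> {x. length x = n})"
    by (auto simp: length_Suc_conv)
  have inj: "inj_on (\<lambda>(b, x). b # x) (UNIV \<times> {x :: 'a list. length x = n})"
    by (auto simp: inj_on_def)
  have "(\<Sum>x | length x = Suc n. g x) = (\<Sum>(b, x)\<in>UNIV \<times> {x. length x = n}. g (b # x))"
    unfolding eq sum.reindex[OF inj] by (simp add: comp_def case_prod_beta)
  also have "\<dots> = (\<Sum>b\<in>UNIV. \<Sum>x | length x = n. g (b # x))"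
    by (rule sum.cartesian_product[symmetric])
  finally show ?thesis .
qed

lemma sum_gf4_chi_coord_prod:
  "length fs = length c \<Longrightarrow>
    (\<Sum>u | length u = length c. gf4_chi (herm_ip c u) * coord_prod fs u)
      = coord_prod (map herm_transform fs) c"
proof (induction fs c rule: list_induct2)
  case Nil
  then show ?case by simp
next
  case (Cons f fs a c)
  have "(\<Sum>u | length u = length (a # c). gf4_chi (herm_ip (a # c) u) * coord_prod (f # fs) u)
      = (\<Sum>b\<in>UNIV. gf4_chi (gf4_mul a (gf4_mul b b)) * f b
          * (\<Sum>u | length u = length c. gf4_chi (herm_ip c u) * coord_prod fs u))"
    by (simp add: sum_lists_length_Suc gf4_chi_add sum_distrib_left mult_ac)
  also have "\<dots> = coord_prod (map herm_transform (f # fs)) (a # c)"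
    by (simp add: Cons.IH herm_transform_def[of f] sum_distrib_right)
  finally show ?case .
qed

theorem herm_macwilliams:
  assumes C: "linear_code n C" and fs: "length fs = n"
  shows "(\<Sum>c\<in>C. coord_prod (map herm_transform fs) c)
    = int (card C) * (\<Sum>u\<in>herm_dual n C. coord_prod fs u)"
proof -
  have "(\<Sum>c\<in>C. coord_prod (map herm_transform fs) c)
      = (\<Sum>c\<in>C. \<Sum>u | length u = n. gf4_chi (herm_ip c u) * coord_prod fs u)"
    by (intro sum.cong refl) (simp add: fs linear_codeD(1)[OF C] flip: sum_gf4_chi_coord_prod)
  also have "\<dots> = (\<Sum>u | length u = n. coord_prod fs u * (\<Sum>c\<in>C. gf4_chi (herm_ip c u)))"
    by (subst sum.swap) (simp add: sum_distrib_left mult_ac)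
  also have "\<dots> = (\<Sum>u | length u = n.
      if u \<in> herm_dual n C then int (card C) * coord_prod fs u else 0)"
    by (intro sum.cong) (simp_all add: sum_gf4_chi_herm_ip[OF C])
  also have "\<dots> = int (card C) * (\<Sum>u\<in>herm_dual n C. coord_prod fs u)"
    using herm_dual_subset[of n C]
    by (simp add: sum.If_cases finite_lists_length sum_distrib_left Int_absorb1)
  finally show ?thesis .
qed

lemma herm_self_dualD:
  assumes "herm_self_dual n D"
  shows "linear_code n D" and "herm_dual n D = D"
  using assms by (simp_all add: herm_self_dual_def)

corollary herm_self_dual_macwilliams:
  assumes "herm_self_dual n D" and "length fs = n"
  shows "(\<Sum>c\<in>D. coord_prod (map herm_transform fs) c)
    = int (card D) * (\<Sum>c\<in>D. coord_prod fs c)"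
  using herm_macwilliams[OF herm_self_dualD(1)[OF assms(1)] assms(2)]
  by (simp add: herm_self_dualD(2)[OF assms(1)])

definition zero_nonzero :: "int \<Rightarrow> int \<Rightarrow> gf4 \<Rightarrow> int" where
  "zero_nonzero p q b = (if b = G0 then p else q)"

lemma herm_transform_zero_nonzero:
  "herm_transform (zero_nonzero p q) = zero_nonzero (p + 3 * q) (p - q)"
proof
  fix a
  show "herm_transform (zero_nonzero p q) a = zero_nonzero (p + 3 * q) (p - q) a"
    by (cases a) (simp_all add: herm_transform_def zero_nonzero_def sum_UNIV_gf4)
qed

lemma coord_prod_zero_nonzero:
  "length x = n \<Longrightarrow> coord_prod (replicate n (zero_nonzero p q)) x = p ^ (n - wt x) * q ^ wt x"
proof (induction x arbitrary: n)
  case (Cons a x)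
  then show ?case
    using wt_le_length[of x] by (auto simp: zero_nonzero_def Suc_diff_le)
qed simp

lemma herm_self_dual_zero: "herm_self_dual n D \<Longrightarrow> replicate n G0 \<in> D"
  by (rule linear_codeD(2)[OF herm_self_dualD(1)])

lemma herm_self_dual_length: "herm_self_dual n D \<Longrightarrow> c \<in> D \<Longrightarrow> length c = n"
  by (rule linear_codeD(1)[OF herm_self_dualD(1)])

lemma herm_self_dual_finite: "herm_self_dual n D \<Longrightarrow> finite D"
  by (rule linear_code_finite[OF herm_self_dualD(1)])

lemma herm_self_dual_orthogonal:
  "herm_self_dual n D \<Longrightarrow> c \<in> D \<Longrightarrow> u \<in> D \<Longrightarrow> herm_ip c u = G0"
  using herm_self_dualD(2)[of n D] by (auto simp: herm_dual_def)

lemma herm_self_dual_even_wt: "herm_self_dual n D \<Longrightarrow> c \<in> D \<Longrightarrow> even (wt c)"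
  using herm_self_dual_orthogonal[of n D c c] herm_ip_self[of c] by (simp split: if_splits)

theorem herm_self_dual_card:
  assumes D: "herm_self_dual n D"
  shows "card D = 2 ^ n"
proof -
  have "coord_prod (replicate n (zero_nonzero 4 0)) c = (if c = replicate n G0 then 4 ^ n else 0)"
    if "c \<in> D" for c
    using herm_self_dual_length[OF D that] wt_eq_0_iff[of c] by (auto simp: coord_prod_zero_nonzero)
  then have "(\<Sum>c\<in>D. coord_prod (replicate n (zero_nonzero 4 0)) c) = 4 ^ n"
    by (simp add: sum.If_cases herm_self_dual_finite[OF D] herm_self_dual_zero[OF D] Int_absorb1
        cong: sum.cong)
  moreover have "(\<Sum>c\<in>D. coord_prod (replicate n (zero_nonzero 1 1)) c) = int (card D)"
    by (simp add: coord_prod_zero_nonzero herm_self_dual_length[OF D] cong: sum.cong)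
  moreover have "herm_transform (zero_nonzero 1 1) = zero_nonzero 4 0"
    by (simp add: herm_transform_zero_nonzero)
  ultimately have "int (card D) * int (card D) = 4 ^ n"
    using herm_self_dual_macwilliams[OF D, of "replicate n (zero_nonzero 1 1)"] by simp
  then have "card D ^ 2 = (2 ^ n) ^ 2"
    by (simp add: power2_eq_square flip: power_mult power_mult_distrib of_nat_mult)
  then show ?thesis
    by (simp add: power_eq_iff_eq_base)
qed

lemma coord_prod_Cons_replicate:
  "length x = Suc n \<Longrightarrow>
    coord_prod (f # replicate n g) x = f (hd x) * coord_prod (replicate n g) (tl x)"
  by (cases x) simp_all

theorem herm_self_dual_split_macwilliams:
  assumes D: "herm_self_dual (Suc n) D"
  shows "(\<Sum>c\<in>D. zero_nonzero (z + 3 * w) (z - w) (hd c)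
            * ((x + 3 * y) ^ (n - wt (tl c)) * (x - y) ^ wt (tl c)))
       = 2 ^ Suc n * (\<Sum>c\<in>D. zero_nonzero z w (hd c) * (x ^ (n - wt (tl c)) * y ^ wt (tl c)))"
proof -
  define fs where "fs = zero_nonzero z w # replicate n (zero_nonzero x y)"
  have coord_prod_split: "coord_prod (zero_nonzero p q # replicate n (zero_nonzero r s)) c
      = zero_nonzero p q (hd c) * (r ^ (n - wt (tl c)) * s ^ wt (tl c))" if "c \<in> D" for p q r s c
    using herm_self_dual_length[OF D that]
    by (simp add: coord_prod_Cons_replicate coord_prod_zero_nonzero)
  show ?thesis
    using herm_self_dual_macwilliams[OF D, of fs] herm_self_dual_card[OF D]
    by (simp add: fs_def coord_prod_split herm_transform_zero_nonzero cong: sum.cong)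
qed

text \<open>A word \<open>c\<close> of length 36 has type \<open>(t, k)\<close>, where \<open>t\<close> says that its first coordinate
  vanishes and \<open>k\<close> is the weight of the other 35 coordinates.  Summed over a code, the defect
  \<open>macw_term x y z w\<close> of the split MacWilliams identity at \<open>(x, y, z, w)\<close> depends only on
  the number of codewords of each type.\<close>
definition macw_term :: "int \<Rightarrow> int \<Rightarrow> int \<Rightarrow> int \<Rightarrow> bool \<Rightarrow> nat \<Rightarrow> int" where
  "macw_term x y z w t k =
     (if t then z + 3 * w else z - w) * ((x + 3 * y) ^ (35 - k) * (x - y) ^ k)
     - 2 ^ 36 * ((if t then z else w) * (x ^ (35 - k) * y ^ k))"

definition macw_combination :: "(int \<times> int \<times> int \<times> int) list \<Rightarrow> bool \<Rightarrow> nat \<Rightarrow> int" where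
  "macw_combination ps t k = (\<Sum>(x, y, z, w)\<leftarrow>ps. macw_term x y z w t k)"

lemma sum_macw_term:
  assumes "herm_self_dual 36 D"
  shows "(\<Sum>c\<in>D. macw_term x y z w (hd c = G0) (wt (tl c))) = 0"
proof -
  have "(\<Sum>c\<in>D. macw_term x y z w (hd c = G0) (wt (tl c)))
      = (\<Sum>c\<in>D. zero_nonzero (z + 3 * w) (z - w) (hd c)
            * ((x + 3 * y) ^ (35 - wt (tl c)) * (x - y) ^ wt (tl c)))
        - 2 ^ 36 * (\<Sum>c\<in>D. zero_nonzero z w (hd c) * (x ^ (35 - wt (tl c)) * y ^ wt (tl c)))"
    by (simp add: macw_term_def zero_nonzero_def sum_subtractf sum_distrib_left)
  then show ?thesis
    using herm_self_dual_split_macwilliams[of 35 D z w x y] assms by simp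
qed

lemma sum_macw_combination:
  assumes "herm_self_dual 36 D"
  shows "(\<Sum>c\<in>D. macw_combination ps (hd c = G0) (wt (tl c))) = 0"
proof (induction ps)
  case (Cons p ps)
  obtain x y z w where "p = (x, y, z, w)" by (cases p)
  with Cons show ?case
    by (simp add: macw_combination_def sum.distrib sum_macw_term[OF assms])
qed (simp add: macw_combination_def)

definition near_extremal_types :: "(bool \<times> nat) list" where
  "near_extremal_types =
     (True, 0) # map (Pair True) (filter even [12..<36]) @ map (Pair False) (filter odd [11..<36])"

lemma near_extremal_36_type:
  assumes D: "near_extremal_36 D" and c: "c \<in> D"
  shows "(hd c = G0, wt (tl c)) \<in> set near_extremal_types"
    and "wt c = (if hd c = G0 then wt (tl c) else Suc (wt (tl c)))"
proof -
  have hsd: "herm_self_dual 36 D" and mw: "min_weight 36 D 12"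
    using D by (simp_all add: near_extremal_36_def)
  have len: "length c = 36" by (rule herm_self_dual_length[OF hsd c])
  then show wt: "wt c = (if hd c = G0 then wt (tl c) else Suc (wt (tl c)))"
    by (intro wt_eq_hd_tl) auto
  have "wt (tl c) \<le> 35" using wt_le_length[of "tl c"] len by simp
  moreover have "even (wt c)" by (rule herm_self_dual_even_wt[OF hsd c])
  moreover have "wt c = 0 \<or> 12 \<le> wt c"
    using mw c len wt_eq_0_iff[of c] by (auto simp: min_weight_def)
  moreover have "set near_extremal_types = insert (True, 0)
      (Pair True ` {k \<in> {12..<36}. even k} \<union> Pair False ` {k \<in> {11..<36}. odd k})"
    by (simp only: near_extremal_types_def list.set set_append set_map set_filter set_upt)
  ultimately show "(hd c = G0, wt (tl c)) \<in> set near_extremal_types"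
    using wt by (auto split: if_splits)
qed

text \<open>The points \<open>(x, y, z, w)\<close> of the two certificates were found by solving a linear system
  over the rationals: a combination of split MacWilliams identities with prescribed values on the
  26 admissible types.  The large factors in the lemmas below clear denominators.\<close>
definition cert_hd :: "(int \<times> int \<times> int \<times> int) list" where
  "cert_hd = [
    (1, 0, -80089458929957694315998172432348012672496552667441679000, 51766802741732442697535059358303045079480365684907945000),
    (0, 1, 24732886027309438406342774162370570416607081960, 3917005285749474610948812216383223248867519400),
    (-2, 1, -27034168544041859809498800965295949799205, 6868172266404609160005367429115423816355),
    (1, 2, 7535276453329207353208828070637615477, 3079042922275560174870383998884751053),
    (2, 1, -90003688248478891676313592563661316475, -30279522219780577847856134455705328187075),
    (-1, 2, 8384761508264513365785441603946450965, -94101798483232239270178105381200915),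
    (-3, 2, -4354872245013277225102003072764325, 858023034435073047164275448076675),
    (-2, 3, 14677595303622397834113931583925, -769313432583941283235128237075),
    (3, 2, -861038005338364465127776598698725, -4926714805590464318310813050142525),
    (2, 3, 13247966492921490543107748139275, 4534829809929606462101733755475),
    (3, 4, 18503293605457225570715240, -43306354538527370868227800),
    (4, 3, 11093362020900709892820969192, -14553487889743423619592591192)]"

definition cert_wt :: "(int \<times> int \<times> int \<times> int) list" where
  "cert_wt = [
    (1, 0, -25823934726937943664333260667392793068126862607852977000, 0),
    (0, 1, 0, 908056281576209803918654702538947572885129480),
    (-2, 1, -5148009232340818837768032169800307200330, 2574004616170409418884016084900153600165),
    (1, 2, 713368090561139614805960501482476285, 1426736181122279229611921002964952570),
    (2, 1, -9603431347015337057691806318859403508610, -4801715673507668528845903159429701754305),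
    (-1, 2, 380955511409329156814502550125686577, -761911022818658313629005100251373154),
    (-3, 2, -684176987366555817701103817174725, 456117991577703878467402544783150),
    (-2, 3, 1003412383522290193855797390150, -1505118575283435290783696085225),
    (3, 2, -1614956495089497643897688465224425, -1076637663392998429265125643482950),
    (2, 3, 1544887899620623179502194109950, 2317331849430934769253291164925),
    (3, 4, -6867871342471809930377544, -9157161789962413240503392),
    (4, 3, -3272823826993127621083772448, -2454617870244845715812829336)]"

lemma macw_combination_cert_hd:
  "\<forall>(t, k)\<in>set near_extremal_types. macw_combination cert_hd t k
     = 126506477124102695751526243934934678457450066083840000000
       * (if t then of_bool (k = 12) else - 2 * of_bool (k = 11))"
  by (simp add: near_extremal_types_def cert_hd_def macw_combination_def macw_term_def)

lemma macw_combination_cert_wt: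
  "\<forall>(t, k)\<in>set near_extremal_types. macw_combination cert_wt t k
     = 13022725586304689268539466287419746311796330332160000000
       * (let w = if t then k else Suc k in
          12 * of_bool (w = 12) + of_bool (w = 14) - 771120 * of_bool (w = 0))"
  by (simp add: near_extremal_types_def cert_wt_def macw_combination_def macw_term_def)

lemma near_extremal_36_hd_wt_12:
  assumes D: "near_extremal_36 D"
  shows "card {c \<in> D. wt c = 12 \<and> hd c = G0}
    = 2 * card {c \<in> D. wt c = 12 \<and> hd c \<noteq> G0}"
proof -
  have hsd: "herm_self_dual 36 D" using D by (simp add: near_extremal_36_def)
  have "macw_combination cert_hd (hd c = G0) (wt (tl c))
      = 126506477124102695751526243934934678457450066083840000000
        * (of_bool (wt c = 12 \<and> hd c = G0) - 2 * of_bool (wt c = 12 \<and> hd c \<noteq> G0))"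
    if "c \<in> D" for c
    using macw_combination_cert_hd near_extremal_36_type[OF D that] by auto
  then have "0 = 126506477124102695751526243934934678457450066083840000000
      * (int (card {c \<in> D. wt c = 12 \<and> hd c = G0})
         - 2 * int (card {c \<in> D. wt c = 12 \<and> hd c \<noteq> G0}))"
    using sum_macw_combination[OF hsd, of cert_hd] herm_self_dual_finite[OF hsd]
    by (simp add: sum_subtractf sum_distrib_left Int_def cong: sum.cong)
  then show ?thesis by simp
qed

lemma near_extremal_36_wt_12_14:
  assumes D: "near_extremal_36 D"
  shows "12 * card {c \<in> D. wt c = 12} + card {c \<in> D. wt c = 14} = 771120"
proof -
  have hsd: "herm_self_dual 36 D" using D by (simp add: near_extremal_36_def)
  have "macw_combination cert_wt (hd c = G0) (wt (tl c))
      = 13022725586304689268539466287419746311796330332160000000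
        * (12 * of_bool (wt c = 12) + of_bool (wt c = 14) - 771120 * of_bool (wt c = 0))"
    if "c \<in> D" for c
    using macw_combination_cert_wt near_extremal_36_type[OF D that] by (auto simp: Let_def)
  moreover have "{c \<in> D. wt c = 0} = {replicate 36 G0}"
    using herm_self_dual_zero[OF hsd] herm_self_dual_length[OF hsd] wt_eq_0_iff by auto
  ultimately have "0 = 13022725586304689268539466287419746311796330332160000000
      * (12 * int (card {c \<in> D. wt c = 12}) + int (card {c \<in> D. wt c = 14}) - 771120)"
    using sum_macw_combination[OF hsd, of cert_wt] herm_self_dual_finite[OF hsd]
    by (simp add: sum_subtractf sum.distrib sum_distrib_left Int_def cong: sum.cong)
  then show ?thesis by simp
qed

lemma card_hd_nonzero_eq_3_card_hd_G1:
  assumes closed: "\<And>a c. a \<noteq> G0 \<Longrightarrow> c \<in> S \<Longrightarrow> smul a c \<in> S"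
    and nonempty: "[] \<notin> S"
  shows "card {c \<in> S. hd c \<noteq> G0} = 3 * card {c \<in> S. hd c = G1}"
proof -
  let ?B = "{c \<in> S. hd c = G1}"
  have hd_smul_B: "hd (smul a c) = a" if "c \<in> ?B" for a c
    using that nonempty hd_smul[of c a] by (cases "c = []") auto
  have "{c \<in> S. hd c \<noteq> G0} = (\<lambda>(a, c). smul a c) ` ({a. a \<noteq> G0} \<times> ?B)"
  proof (intro equalityI subsetI)
    fix c assume c: "c \<in> {c \<in> S. hd c \<noteq> G0}"
    then obtain b where b: "gf4_mul b (hd c) = G1" "gf4_mul (hd c) b = G1"
      using gf4_inverse_exists by blast
    have "b \<noteq> G0" using b by auto
    moreover have "c \<noteq> []" using c nonempty by auto
    ultimately have "smul b c \<in> ?B"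
      using c closed b by (simp add: hd_smul)
    moreover have "smul (hd c) (smul b c) = c"
      using b by (simp add: smul_smul smul_G1)
    ultimately show "c \<in> (\<lambda>(a, c). smul a c) ` ({a. a \<noteq> G0} \<times> ?B)"
      using c by (intro image_eqI[where x="(hd c, smul b c)"]) simp_all
  qed (auto simp: closed hd_smul_B)
  moreover have "inj_on (\<lambda>(a, c). smul a c) ({a. a \<noteq> G0} \<times> ?B)"
  proof (rule inj_onI)
    fix p p' assume p: "p \<in> {a. a \<noteq> G0} \<times> ?B" and p': "p' \<in> {a. a \<noteq> G0} \<times> ?B"
      and eq: "(\<lambda>(a, c). smul a c) p = (\<lambda>(a, c). smul a c) p'"
    obtain a c a' c' where ac: "p = (a, c)" "p' = (a', c')" by fastforce
    then have a: "a \<noteq> G0" and c: "c \<in> ?B" and c': "c' \<in> ?B" using p p' by auto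
    have "a = a'"
      using arg_cong[OF eq, of hd] ac hd_smul_B[OF c] hd_smul_B[OF c'] by simp
    obtain b where "gf4_mul b a = G1" using a gf4_inverse_exists by blast
    then have "c = c'"
      using arg_cong[OF eq, of "smul b"] ac \<open>a = a'\<close> by (simp add: smul_smul smul_G1)
    with ac \<open>a = a'\<close> show "p = p'" by simp
  qed
  moreover have "{a. a \<noteq> G0} = {G1, Gw, Gw2}"
    using gf4_UNIV by auto
  ultimately show ?thesis
    by (simp add: card_image card_cartesian_product)
qed

lemma linear_code_card_wt_hd_nonzero:
  assumes C: "linear_code n C" and k: "k \<noteq> 0"
  shows "card {c \<in> C. wt c = k \<and> hd c \<noteq> G0} = 3 * card {c \<in> C. wt c = k \<and> hd c = G1}"
proof -
  have "smul a c \<in> {c \<in> C. wt c = k}" if "a \<noteq> G0" "c \<in> {c \<in> C. wt c = k}" for a c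
    using that linear_codeD(4)[OF C] by (simp add: wt_smul)
  moreover have "[] \<notin> {c \<in> C. wt c = k}"
    using k by simp
  ultimately show ?thesis
    using card_hd_nonzero_eq_3_card_hd_G1[of "{c \<in> C. wt c = k}"] by (simp add: conj_ac)
qed

theorem fact5p6:
  assumes "near_extremal_36 D"
  shows "\<exists>\<beta>::nat. card {c \<in> D. wt c = 12} = 9 * \<beta> \<and> 1 \<le> \<beta> \<and> \<beta> \<le> 7140"
proof -
  have hsd: "herm_self_dual 36 D" and mw: "min_weight 36 D 12"
    using assms by (simp_all add: near_extremal_36_def)
  define \<beta> where "\<beta> = card {c \<in> D. wt c = 12 \<and> hd c = G1}"
  have "card {c \<in> D. wt c = 12}
      = card {c \<in> D. wt c = 12 \<and> hd c = G0} + card {c \<in> D. wt c = 12 \<and> hd c \<noteq> G0}"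
    using herm_self_dual_finite[OF hsd]
    by (subst card_Un_disjoint[symmetric]) (auto intro: arg_cong[where f=card])
  also have "\<dots> = 3 * card {c \<in> D. wt c = 12 \<and> hd c \<noteq> G0}"
    using near_extremal_36_hd_wt_12[OF assms] by simp
  also have "\<dots> = 9 * \<beta>"
    using linear_code_card_wt_hd_nonzero[OF herm_self_dualD(1)[OF hsd], of 12] by (simp add: \<beta>_def)
  finally have \<alpha>: "card {c \<in> D. wt c = 12} = 9 * \<beta>" .
  have "{c \<in> D. wt c = 12} \<noteq> {}"
    using mw by (auto simp: min_weight_def)
  then have "card {c \<in> D. wt c = 12} \<noteq> 0"
    using herm_self_dual_finite[OF hsd] by simp
  moreover have "card {c \<in> D. wt c = 12} \<le> 64260"
    using near_extremal_36_wt_12_14[OF assms] by linarith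
  ultimately show ?thesis
    using \<alpha> by auto
qed

end
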